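(* Let $f$ be a WTP function with reward function $F$. For any $\tilde x\in\widetilde{\mathcal{X}}_\ell$, any $\tilde y\in\widetilde{\mathcal{Y}}_{\mathcal{M}}(\tilde x)$ and any contention resolution scheme $\phi$ for $\mathcal{M}$, $$\mathbb{E}_{x\sim\Xi(\tilde x)}[F(x)]\ \ge\ \mathbb{E}_{x\sim\Xi(\tilde x)}\Big[\mathbb{E}_{y\sim\phi(Q(\tilde y,\tilde x,x))}[f(y)]\Big].$$
   Context: $\mathcal{M}=([n],\mathcal{I})$ is a matroid (identified with characteristic vectors of independent sets), $\mathcal{P}(\mathcal{M})$ its matroid polytope. $\mathcal{X}_\ell=\{x\in\{0,1\}^n:\sum_ix_i\le\ell\}$, $\widetilde{\mathcal{X}}_\ell=\{\tilde x\in[0,1]^n:\sum_i\tilde x_i\le\ell\}$, $\mathcal{Y}_{\mathcal{M}}(x)=\{y\in\{0,1\}^n:y\in\mathcal{M},y\le x\}$, $\widetilde{\mathcal{Y}}_{\mathcal{M}}(\tilde x)=\{\tilde y\in[0,1]^n:\tilde y\in\mathcal{P}(\mathcal{M}),\tilde y\le\tilde x\}$. A WTP function is $f(y)=\sum_{j\in\mathcal{C}}c_j\min\{b_j,y\cdot w_j\}$ ($\mathcal{C}$ finite, $c_j>0$, $b_j\in\mathbb{R}_{\ge0}\cup\{\infty\}$, $w_j\in\mathbb{R}^n_{\ge0}$), and $F(x)=\max_{y\in\mathcal{Y}_{\mathcal{M}}(x)}f(y)$. $\Xi$ is randomized pipage rounding (Chekuri–Vondrák–Zenklusen 2009) from $\widetilde{\mathcal{X}}_\ell$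 to $\mathcal{X}_\ell$: repeatedly pick two fractional coordinates $i,j$, set $\epsilon_1=\min(1-\tilde x_i,\tilde x_j)$, $\epsilon_2=\min(\tilde x_i,1-\tilde x_j)$, and with probability $\epsilon_2/(\epsilon_1+\epsilon_2)$ move to $(\tilde x_i+\epsilon_1,\tilde x_j-\epsilon_1)$, else to $(\tilde x_i-\epsilon_2,\tilde x_j+\epsilon_2)$, until integral (a lone fractional coordinate is handled as in that reference). The randomized map $Q(\tilde y,\tilde x,x)$: $a_i=\tilde y_i/\tilde x_i$ if $\tilde x_i\ne0$, else $0$; independent $c_i\sim\mathrm{Bernoulli}(a_i)$; output $\hat y$ with $\hat y_i=1$ iff $x_i=1$ and $c_i=1$. A contention resolution scheme for $\mathcal{M}$ is a randomized $\phi:\{0,1\}^n\to\mathcal{I}$ with $\phi(z)\le z$. *)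

theory Defs
  imports "HOL-Probability.Probability"
begin

text \<open>Ground set [n] is rendered as {0..<n}. Integral vectors in {0,1}^n are identified
with subsets of {0..<n}; fractional vectors are functions nat => real vanishing outside {0..<n}.\<close>

definition indic :: "nat set \<Rightarrow> nat \<Rightarrow> real" where
  "indic S = (\<lambda>i. if i \<in> S then 1 else 0)"

definition matroid :: "nat \<Rightarrow> nat set set \<Rightarrow> bool" where
  "matroid n I \<longleftrightarrow>
     (\<forall>A\<in>I. A \<subseteq> {0..<n}) \<and> {} \<in> I \<and>
     (\<forall>A B. A \<in> I \<longrightarrow> B \<subseteq> A \<longrightarrow> B \<in> I) \<and>
     (\<forall>A B. A \<in> I \<longrightarrow> B \<in> I \<longrightarrow> card A < card B \<longrightarrow> (\<exists>e\<in>B - A. insert e A \<in> I))"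

definition matroid_polytope :: "nat \<Rightarrow> nat set set \<Rightarrow> (nat \<Rightarrow> real) set" where
  "matroid_polytope n I = {y. \<exists>mu. (\<forall>A\<in>I. mu A \<ge> 0) \<and> (\<Sum>A\<in>I. mu A) = 1 \<and>
       y = (\<lambda>i. \<Sum>A\<in>I. mu A * indic A i)}"

definition frac_box :: "nat \<Rightarrow> (nat \<Rightarrow> real) set" where
  "frac_box n = {x. (\<forall>i<n. 0 \<le> x i \<and> x i \<le> 1) \<and> (\<forall>i\<ge>n. x i = 0)}"

definition Xt :: "nat \<Rightarrow> nat \<Rightarrow> (nat \<Rightarrow> real) set" where
  "Xt n l = {x \<in> frac_box n. (\<Sum>i<n. x i) \<le> real l}"

definition Yt :: "nat \<Rightarrow> nat set set \<Rightarrow> (nat \<Rightarrow> real) \<Rightarrow> (nat \<Rightarrow> real) set" where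
  "Yt n I xt = {y \<in> frac_box n. y \<in> matroid_polytope n I \<and> (\<forall>i<n. y i \<le> xt i)}"

text \<open>WTP function; b j = None encodes b_j = infinity.\<close>
definition wtp :: "nat \<Rightarrow> 'c set \<Rightarrow> ('c \<Rightarrow> real) \<Rightarrow> ('c \<Rightarrow> real option) \<Rightarrow> ('c \<Rightarrow> nat \<Rightarrow> real)
                   \<Rightarrow> (nat \<Rightarrow> real) \<Rightarrow> real" where
  "wtp n C c b w y = (\<Sum>j\<in>C. c j * (case b j of None \<Rightarrow> (\<Sum>i<n. y i * w j i)
                                           | Some bj \<Rightarrow> min bj (\<Sum>i<n. y i * w j i)))"

definition is_wtp :: "nat \<Rightarrow> 'c set \<Rightarrow> ('c \<Rightarrow> real) \<Rightarrow> ('c \<Rightarrow> real option) \<Rightarrow> ('c \<Rightarrow> nat \<Rightarrow> real) \<Rightarrow> bool" where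
  "is_wtp n C c b w \<longleftrightarrow> finite C \<and> (\<forall>j\<in>C. c j > 0 \<and> (\<forall>bj. b j = Some bj \<longrightarrow> bj \<ge> 0)
                          \<and> (\<forall>i<n. w j i \<ge> 0))"

definition reward :: "nat set set \<Rightarrow> ((nat \<Rightarrow> real) \<Rightarrow> real) \<Rightarrow> nat set \<Rightarrow> real" where
  "reward I f x = Max ((\<lambda>y. f (indic y)) ` {y \<in> I. y \<subseteq> x})"

definition fracs :: "nat \<Rightarrow> (nat \<Rightarrow> real) \<Rightarrow> nat set" where
  "fracs n x = {i \<in> {0..<n}. 0 < x i \<and> x i < 1}"

definition pipage_step :: "nat \<Rightarrow> (nat \<Rightarrow> real) \<Rightarrow> (nat \<Rightarrow> real) pmf" where
  "pipage_step n x =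
    (if card (fracs n x) \<ge> 2 then
       (let i = Min (fracs n x); j = Min (fracs n x - {i});
            e1 = min (1 - x i) (x j); e2 = min (x i) (1 - x j) in
        map_pmf (\<lambda>b. if b then x(i := x i + e1, j := x j - e1) else x(i := x i - e2, j := x j + e2))
                (bernoulli_pmf (e2 / (e1 + e2))))
     else if card (fracs n x) = 1 then
       (let i = the_elem (fracs n x) in
        map_pmf (\<lambda>b. if b then x(i := 1) else x(i := 0)) (bernoulli_pmf (x i)))
     else return_pmf x)"

fun pipage_iter :: "nat \<Rightarrow> nat \<Rightarrow> (nat \<Rightarrow> real) \<Rightarrow> (nat \<Rightarrow> real) pmf" where
  "pipage_iter n 0 x = return_pmf x"
| "pipage_iter n (Suc k) x = pipage_step n x \<bind> pipage_iter n k"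

text \<open>Each step makes at least one coordinate integral, so n steps suffice.
The integral result is returned as the set of its 1-coordinates.\<close>
definition pipage :: "nat \<Rightarrow> (nat \<Rightarrow> real) \<Rightarrow> nat set pmf" where
  "pipage n x = map_pmf (\<lambda>z. {i \<in> {0..<n}. z i = 1}) (pipage_iter n n x)"

definition Qmap :: "nat \<Rightarrow> (nat \<Rightarrow> real) \<Rightarrow> (nat \<Rightarrow> real) \<Rightarrow> nat set \<Rightarrow> nat set pmf" where
  "Qmap n yt xt x = map_pmf (\<lambda>c. {i \<in> x. c i})
      (Pi_pmf {0..<n} False (\<lambda>i. bernoulli_pmf (if xt i \<noteq> 0 then yt i / xt i else 0)))"

definition is_crs :: "nat \<Rightarrow> nat set set \<Rightarrow> (nat set \<Rightarrow> nat set pmf) \<Rightarrow> bool" where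
  "is_crs n I \<phi> \<longleftrightarrow> (\<forall>z \<subseteq> {0..<n}. \<forall>y \<in> set_pmf (\<phi> z). y \<in> I \<and> y \<subseteq> z)"

end

theory Submission
  imports Defs
begin

text \<open>The inequality holds pointwise in the rounded vector x: Q keeps only coordinates of x,
and the contention resolution scheme returns an independent subset of what it is given, so
every outcome y of Q followed by the scheme is a feasible choice in the maximum defining F(x),
whence f(y) \<le> F(x). All distributions involved have finite support, so integrability
is automatic.\<close>

lemma matroid_finite: "matroid n I \<Longrightarrow> finite I"
  unfolding matroid_def by (auto intro: finite_subset[of I "Pow {0..<n}"])

lemma finite_set_pmf_pipage: "finite (set_pmf (pipage n x))"
  unfolding pipage_def by (rule finite_subset[of _ "Pow {0..<n}"]) auto

lemma set_pmf_Qmap_subset: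
  assumes "z \<in> set_pmf (Qmap n yt xt x)"
  shows "z \<subseteq> x \<inter> {0..<n}"
proof -
  obtain coins where coins: "coins \<in> set_pmf (Pi_pmf {0..<n} False
      (\<lambda>i. bernoulli_pmf (if xt i \<noteq> 0 then yt i / xt i else 0)))" and z: "z = {i \<in> x. coins i}"
    using assms unfolding Qmap_def by auto
  have "\<forall>i. i \<notin> {0..<n} \<longrightarrow> \<not> coins i"
    using subsetD[OF set_Pi_pmf_subset[OF finite_atLeastLessThan] coins] by simp
  then show ?thesis using z by auto
qed

lemma set_pmf_Qmap_crs:
  assumes "is_crs n I \<phi>" and "y \<in> set_pmf (Qmap n yt xt x \<bind> \<phi>)"
  shows "y \<in> I" and "y \<subseteq> x"
proof -
  obtain z where z: "z \<in> set_pmf (Qmap n yt xt x)" and y: "y \<in> set_pmf (\<phi> z)"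
    using assms(2) by auto
  from set_pmf_Qmap_subset[OF z] have "z \<subseteq> {0..<n}" and "z \<subseteq> x" by auto
  moreover from assms(1) y \<open>z \<subseteq> {0..<n}\<close> have "y \<in> I" and "y \<subseteq> z"
    unfolding is_crs_def by blast+
  ultimately show "y \<in> I" and "y \<subseteq> x" by auto
qed

lemma reward_ge:
  assumes "finite I" and "y \<in> I" and "y \<subseteq> x"
  shows "f (indic y) \<le> reward I f x"
  unfolding reward_def using assms by (intro Max_ge) auto

lemma expectation_le_const_finite_pmf:
  fixes g :: "'a \<Rightarrow> real"
  assumes "finite (set_pmf p)" and "\<And>x. x \<in> set_pmf p \<Longrightarrow> g x \<le> c"
  shows "measure_pmf.expectation p g \<le> c"
  using assms
  by (intro measure_pmf.integral_le_const integrable_measure_pmf_finite AE_pmfI) auto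

lemma expectation_crs_Qmap_le_reward:
  assumes "matroid n I" and "is_crs n I \<phi>"
  shows "measure_pmf.expectation (Qmap n yt xt x \<bind> \<phi>) (\<lambda>y. f (indic y)) \<le> reward I f x"
proof (rule expectation_le_const_finite_pmf)
  have "set_pmf (Qmap n yt xt x \<bind> \<phi>) \<subseteq> I"
    using set_pmf_Qmap_crs(1)[OF assms(2)] by blast
  then show "finite (set_pmf (Qmap n yt xt x \<bind> \<phi>))"
    using matroid_finite[OF assms(1)] by (rule finite_subset)
next
  fix y assume "y \<in> set_pmf (Qmap n yt xt x \<bind> \<phi>)"
  with assms(2) have "y \<in> I" and "y \<subseteq> x" by (rule set_pmf_Qmap_crs)+
  with matroid_finite[OF assms(1)] show "f (indic y) \<le> reward I f x" by (rule reward_ge)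
qed

theorem lemma12:
  fixes n l :: nat and I :: "nat set set" and C :: "'c set" and c :: "'c \<Rightarrow> real"
    and b :: "'c \<Rightarrow> real option" and w :: "'c \<Rightarrow> nat \<Rightarrow> real"
    and xt yt :: "nat \<Rightarrow> real" and \<phi> :: "nat set \<Rightarrow> nat set pmf"
  assumes "matroid n I"
    and "is_wtp n C c b w"
    and "xt \<in> Xt n l"
    and "yt \<in> Yt n I xt"
    and "is_crs n I \<phi>"
  shows "measure_pmf.expectation (pipage n xt) (\<lambda>x. reward I (wtp n C c b w) x)
         \<ge> measure_pmf.expectation (pipage n xt)
             (\<lambda>x. measure_pmf.expectation (Qmap n yt xt x \<bind> \<phi>) (\<lambda>y. wtp n C c b w (indic y)))"
proof -
  have integrable: "integrable (pipage n xt) g" for g :: "nat set \<Rightarrow> real"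
    using finite_set_pmf_pipage by (rule integrable_measure_pmf_finite)
  show ?thesis
    by (rule integral_mono[OF integrable integrable expectation_crs_Qmap_le_reward[OF assms(1,5)]])
qed

end
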